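(* Let $X$ and $Y$ be non-negative random variables with absolutely continuous distribution functions $F$ and $G$ (survival functions $\bar F=1-F$, $\bar G=1-G$), and let $\alpha,\beta>0$. Define $$R_{\alpha,\beta}(\bar F,\bar G,t)=\int_t^\infty\left(\frac{\bar F(x)}{\bar F(t)}\right)^{\alpha}\left(\frac{\bar G(x)}{\bar G(t)}\right)^{\beta}dx,\quad t\ge0.$$ If $R_{\alpha,\beta}(\bar F,\bar G,t)=c$ for all $t\ge 0$, where $c$ is a positive constant, then $F$ is an exponential distribution if and only if $G$ is an exponential distribution.
   Context: $R_{\alpha,\beta}(\bar F,\bar G,t)$ is the dynamic relative cumulative residual information measure between the residual lives $(X-t\mid X>t)$ and $(Y-t\mid Y>t)$. *)

theory Defs
  imports "HOL-Probability.Probability"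
begin

definition surv :: "real measure \<Rightarrow> real \<Rightarrow> real" where
  "surv M x = 1 - cdf M x"

definition R_ab :: "real \<Rightarrow> real \<Rightarrow> real measure \<Rightarrow> real measure \<Rightarrow> real \<Rightarrow> real" where
  "R_ab \<alpha> \<beta> M N t =
     (LBINT x:{t..}. (surv M x / surv M t) powr \<alpha> * (surv N x / surv N t) powr \<beta>)"

definition is_exponential :: "real measure \<Rightarrow> bool" where
  "is_exponential M \<longleftrightarrow>
     (\<exists>l>0. \<forall>x. cdf M x = (if x < 0 then 0 else 1 - exp (- l * x)))"

end

theory Submission
  imports Defs
begin

text \<open>Put \<open>S = Fbar\<^sup>\<alpha> Gbar\<^sup>\<beta>\<close>. Constancy of \<open>R\<^sub>\<alpha>\<^sub>,\<^sub>\<beta>\<close> says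
  \<open>\<integral>\<^sub>t\<^sup>\<infinity> S = c S(t)\<close>, so \<open>S\<close> solves \<open>S' = -S/c\<close> with \<open>S(0) = 1\<close>, i.e.
  \<open>S(x) = exp(-x/c)\<close>. If \<open>Fbar(x) = exp(-\<lambda>x)\<close>, then
  \<open>Gbar(x) = exp(-(1/c - \<alpha>\<lambda>) x / \<beta>)\<close>, and this rate must be positive because
  \<open>Gbar\<close> tends to 0; the converse is symmetric.\<close>

lemma linear_integral_equation_imp_exp:
  fixes f :: "real \<Rightarrow> real"
  assumes "c \<noteq> 0"
    and integrable: "\<And>s. s \<ge> 0 \<Longrightarrow> f integrable_on {0..s}"
    and eq: "\<And>s. s \<ge> 0 \<Longrightarrow> f s = a - integral {0..s} f / c"
    and "s \<ge> 0"
  shows "f s = a * exp (- s / c)"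
proof -
  define g where "g u = (a - integral {0..u} f / c) * exp (u / c)" for u
  have cont: "continuous_on {0..s} f"
  proof -
    have "continuous_on {0..s} (\<lambda>u. a - integral {0..u} f / c)"
      using \<open>c \<noteq> 0\<close> by (intro continuous_intros indefinite_integral_continuous_1 integrable \<open>s \<ge> 0\<close>) auto
    then show ?thesis by (rule continuous_on_eq) (simp add: eq)
  qed
  have "(g has_field_derivative 0) (at u within {0..s})" if u: "u \<in> {0..s}" for u
  proof -
    have "((\<lambda>u. integral {0..u} f) has_field_derivative f u) (at u within {0..s})"
      using integral_has_vector_derivative[OF cont u]
      by (simp add: has_real_derivative_iff_has_vector_derivative)
    moreover have "f u = a - integral {0..u} f / c" using u eq by simp
    ultimately show ?thesis
      unfolding g_def using \<open>c \<noteq> 0\<close> by (auto intro!: derivative_eq_intros simp: field_simps)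
  qed
  then obtain C where "\<forall>u\<in>{0..s}. g u = C"
    using has_field_derivative_zero_constant[OF convex_real_interval(5)] by blast
  then have "g s = g 0" using \<open>s \<ge> 0\<close> by simp
  then have "f s * exp (s / c) = a" unfolding g_def eq[OF \<open>s \<ge> 0\<close>, symmetric] by simp
  then show ?thesis by (simp add: exp_minus field_simps)
qed

lemma tail_integral_proportional_imp_exp:
  fixes f :: "real \<Rightarrow> real"
  assumes "c \<noteq> 0"
    and tail: "\<And>t. t \<ge> 0 \<Longrightarrow> (f has_integral c * f t) {t..}"
    and "s \<ge> 0"
  shows "f s = f 0 * exp (- s / c)"
proof (rule linear_integral_equation_imp_exp[OF \<open>c \<noteq> 0\<close> _ _ \<open>s \<ge> 0\<close>])
  show integrable: "f integrable_on {0..s}" for s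
    by (rule integrable_on_subinterval[OF has_integral_integrable[OF tail[of 0]]]) auto
  show "f s = f 0 - integral {0..s} f / c" if "s \<ge> 0" for s
  proof -
    have "(f has_integral (integral {0..s} f + c * f s)) ({0..s} \<union> {s..})"
      by (rule has_integral_Un) (use integrable tail that in \<open>auto simp: Int_atLeastAtMost\<close>)
    moreover have "{0..s} \<union> {s..} = {0..}" using that by auto
    ultimately have "integral {0..s} f + c * f s = c * f 0"
      using tail[of 0] has_integral_unique by auto
    then show ?thesis using \<open>c \<noteq> 0\<close> by (simp add: field_simps)
  qed
qed

lemma (in real_distribution) cdf_eq_0_if_neg:
  assumes "measure M {..<0} = 0" and "x < 0"
  shows "cdf M x = 0"
proof -
  have "cdf M x \<le> measure M {..<0}"
    unfolding cdf_def using \<open>x < 0\<close> by (intro finite_measure_mono) auto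
  then show ?thesis using assms(1) cdf_nonneg by (metis order_antisym)
qed

lemma (in real_distribution) cdf_0_eq_0:
  assumes "measure M {..<0} = 0" and "absolutely_continuous lborel M"
  shows "cdf M 0 = 0"
proof -
  have "{0::real} \<in> null_sets lborel" by (rule countable_imp_null_set_lborel) simp
  then have "{0} \<in> null_sets M" using assms(2) unfolding absolutely_continuous_def by blast
  moreover have "{..0::real} = {..<0} \<union> {0}" by auto
  ultimately have "cdf M 0 = measure M {..<0}"
    unfolding cdf_def by (metis measure_Un_null_set events_eq_borel lessThan_borel)
  then show ?thesis using assms(1) by simp
qed

lemma (in real_distribution) surv_nonneg: "0 \<le> surv M x"
  using cdf_bounded_prob by (simp add: surv_def)

lemma (in real_distribution) is_exponentialI_surv:
  assumes "measure M {..<0} = 0" and surv: "\<And>x. x \<ge> 0 \<Longrightarrow> surv M x = exp (- k * x)"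
  shows "is_exponential M"
proof -
  have "k > 0"
  proof (rule ccontr)
    assume "\<not> k > 0"
    then have "cdf M x \<le> 0" if "x \<ge> 0" for x
    proof -
      have "1 \<le> exp (- k * x)" using \<open>\<not> k > 0\<close> that by (simp add: mult_nonpos_nonneg)
      then show ?thesis using surv[OF that] unfolding surv_def by linarith
    qed
    then have "\<forall>\<^sub>F x in at_top. cdf M x \<le> 0"
      by (rule eventually_mono[OF eventually_ge_at_top[of 0]])
    then have "1 \<le> (0::real)"
      by (rule tendsto_le[OF trivial_limit_at_top_linorder tendsto_const cdf_lim_at_top_prob])
    then show False by simp
  qed
  moreover have "cdf M x = (if x < 0 then 0 else 1 - exp (- k * x))" for x
    using cdf_eq_0_if_neg[OF assms(1)] surv[of x] by (auto simp: surv_def)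
  ultimately show ?thesis unfolding is_exponential_def by blast
qed

lemma surv_powr_mult_eq_exp_if_R_ab_const:
  assumes "real_distribution M" and "real_distribution N"
    and "cdf M 0 = 0" and "cdf N 0 = 0" and "c > 0"
    and R: "\<And>t. t \<ge> 0 \<Longrightarrow> R_ab \<alpha> \<beta> M N t = c" and "x \<ge> 0"
  shows "surv M x powr \<alpha> * surv N x powr \<beta> = exp (- x / c)"
proof -
  interpret M: real_distribution M by fact
  interpret N: real_distribution N by fact
  define S where "S x = surv M x powr \<alpha> * surv N x powr \<beta>" for x
  have R_eq: "R_ab \<alpha> \<beta> M N t = (LBINT x:{t..}. S x) / S t" for t
    unfolding R_ab_def S_def by (simp add: powr_divide M.surv_nonneg N.surv_nonneg)
  have S_pos: "S t > 0" if "t \<ge> 0" for t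
  proof -
    txt \<open>Where \<open>S\<close> vanished, \<open>R_ab\<close> would be 0, as division by 0 yields 0.\<close>
    have "S t \<noteq> 0" using R[OF that] \<open>c > 0\<close> by (auto simp: R_eq)
    moreover have "S t \<ge> 0" by (simp add: S_def)
    ultimately show ?thesis by simp
  qed
  have tail: "(S has_integral c * S t) {t..}" if "t \<ge> 0" for t
  proof -
    have integral: "(LBINT x:{t..}. S x) = c * S t"
      using R[OF that] S_pos[OF that] by (simp add: R_eq field_simps)
    have "set_integrable lborel {t..} S"
    proof (rule ccontr)
      assume "\<not> set_integrable lborel {t..} S"
      then have "(LBINT x:{t..}. S x) = 0"
        by (simp add: set_integrable_def set_lebesgue_integral_def not_integrable_integral_eq)
      then show False using integral S_pos[OF that] \<open>c > 0\<close> by simp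
    qed
    then show ?thesis
      using integral set_borel_integral_eq_integral by (metis has_integral_integral)
  qed
  have "S 0 = 1" using assms(3,4) by (simp add: S_def surv_def)
  then show ?thesis
    using tail_integral_proportional_imp_exp[of c S x] tail \<open>c > 0\<close> \<open>x \<ge> 0\<close> by (simp add: S_def)
qed

lemma is_exponential_if_surv_powr_mult_eq_exp:
  assumes "real_distribution N" and "measure N {..<0} = 0" and "is_exponential M" and "\<beta> \<noteq> 0"
    and prod: "\<And>x. x \<ge> 0 \<Longrightarrow> surv M x powr \<alpha> * surv N x powr \<beta> = exp (- x / c)"
  shows "is_exponential N"
proof -
  interpret N: real_distribution N by fact
  obtain l where l: "\<And>x. x \<ge> 0 \<Longrightarrow> surv M x = exp (- l * x)"
    using assms(3) unfolding is_exponential_def surv_def by force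
  show ?thesis
  proof (rule N.is_exponentialI_surv[OF assms(2)])
    fix x :: real
    assume "x \<ge> 0"
    have "exp (- l * x * \<alpha>) * surv N x powr \<beta> = exp (- x / c)"
      using prod[OF \<open>x \<ge> 0\<close>] l[OF \<open>x \<ge> 0\<close>] by (simp add: exp_powr_real)
    then have "surv N x powr \<beta> = exp (- x / c) / exp (- l * x * \<alpha>)"
      by (simp add: field_simps)
    also have "\<dots> = exp (- (1 / c - \<alpha> * l) * x)"
      by (simp flip: exp_diff) (simp add: algebra_simps)
    finally have N_powr: "surv N x powr \<beta> = exp (- (1 / c - \<alpha> * l) * x)" .
    then have "surv N x \<noteq> 0" by auto
    then have "surv N x = (surv N x powr \<beta>) powr (1 / \<beta>)"
      using N.surv_nonneg \<open>\<beta> \<noteq> 0\<close> by (simp add: powr_powr)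
    also have "\<dots> = exp (- ((1 / c - \<alpha> * l) / \<beta>) * x)"
      using \<open>\<beta> \<noteq> 0\<close> by (simp add: N_powr exp_powr_real field_simps)
    finally show "surv N x = exp (- ((1 / c - \<alpha> * l) / \<beta>) * x)" .
  qed
qed

theorem theorem3p1:
  fixes M N :: "real measure" and \<alpha> \<beta> c :: real
  assumes "real_distribution M" and "real_distribution N"
    and "measure M {..<0} = 0" and "measure N {..<0} = 0"
    and "absolutely_continuous lborel M" and "absolutely_continuous lborel N"
    and "\<alpha> > 0" and "\<beta> > 0" and "c > 0"
    and "\<forall>t\<ge>0. R_ab \<alpha> \<beta> M N t = c"
  shows "is_exponential M \<longleftrightarrow> is_exponential N"
proof -
  have prod: "surv M x powr \<alpha> * surv N x powr \<beta> = exp (- x / c)" if "x \<ge> 0" for x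
  proof (rule surv_powr_mult_eq_exp_if_R_ab_const[OF assms(1,2) _ _ assms(9) _ that])
    show "cdf M 0 = 0" by (rule real_distribution.cdf_0_eq_0[OF assms(1,3,5)])
    show "cdf N 0 = 0" by (rule real_distribution.cdf_0_eq_0[OF assms(2,4,6)])
    show "R_ab \<alpha> \<beta> M N t = c" if "t \<ge> 0" for t using assms(10) that by blast
  qed
  have prod': "surv N x powr \<beta> * surv M x powr \<alpha> = exp (- x / c)" if "x \<ge> 0" for x
    using prod[OF that] by (simp add: mult.commute)
  show ?thesis
  proof
    assume "is_exponential M"
    show "is_exponential N"
      by (rule is_exponential_if_surv_powr_mult_eq_exp[OF assms(2,4) \<open>is_exponential M\<close> _ prod])
        (use assms(8) in simp)
  next
    assume "is_exponential N"
    show "is_exponential M"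
      by (rule is_exponential_if_surv_powr_mult_eq_exp[OF assms(1,3) \<open>is_exponential N\<close> _ prod'])
        (use assms(7) in simp)
  qed
qed

end
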